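(* Let $G=(V,E)$ be a computation graph with $n=|V|$ vertices and at least one edge, and let $M$ be the fast-memory size. Let $J^*_G$ be the minimum number of non-trivial I/Os over all valid evaluations of $G$. Let $L=D-A$ be the Laplacian of the underlying undirected unweighted graph of $G$, with eigenvalues $\lambda_1(L)\le\dots\le\lambda_n(L)$ in increasing order. Then for every integer $k$ with $1\le k\le n$, $$J^*_G \;\geq\; \frac{1}{\max_{v\in V} d_{out}(v)}\left\lfloor \frac{n}{k}\right\rfloor \sum_{i=1}^k \lambda_i(L) \;-\; 2kM,$$ where $d_{out}(v)$ is the out-degree of $v$ in $G$.
   Context: A computation graph is a finite directed acyclic graph $G=(V,E)$. Each vertex is an operation producing a single element, and an edge $(u,v)$ means the result of $u$ is an operand of $v$. Sources are the inputs and sinks are the outputs. Execution model: a single processor has a fast memory holding at most $M$ elements and an unbounded slow memory. Every vertex is evaluated exactly once (no recomputation), in an order that is topological with respect to $G$. To evaluate $v$, all parents of $v$ must be in fast memory; a parent not present must be read from slow memory. The eviction policy is unconstrained, but a value that is evicted while still needed by a later vertex must first be written to slow memory. Only non-trivial I/O is counted. Inputs can be placed directly into fast memory at no cost, and outputs are reported immediately at no cost when computed. However, an input that is evicted while still needed must be written to slow memory. Each transfer of one element between fast and slow memory counts as one I/O. $A$ is the adjacency matrix of the undirected graph obtained from $G$ by forgetting edge directions, and $D$ is its diagonal degree matrix. *)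

theory Defs
  imports "Jordan_Normal_Form.Char_Poly" "HOL-Library.Extended_Real"
begin

(* A computation graph: vertex set {0..<n} (vertices are labelled by 0..n-1),
   directed edge set E, (u,v) \<in> E meaning u is an operand of v. *)
definition comp_graph :: "nat \<Rightarrow> (nat \<times> nat) set \<Rightarrow> bool" where
  "comp_graph n E \<longleftrightarrow> E \<subseteq> {0..<n} \<times> {0..<n} \<and> acyclic E"

definition parents :: "(nat \<times> nat) set \<Rightarrow> nat \<Rightarrow> nat set" where
  "parents E v = {u. (u, v) \<in> E}"

definition out_deg :: "(nat \<times> nat) set \<Rightarrow> nat \<Rightarrow> nat" where
  "out_deg E v = card {w. (v, w) \<in> E}"

(* Execution model.  Machine state: (fast memory, slow memory, already evaluated). *)
datatype io_op = Compute nat | Read nat | Write nat | Evict nat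

type_synonym mstate = "nat set \<times> nat set \<times> nat set"

(* Evaluating v (for a source: placing
   the input into fast memory) costs nothing, requires that v has not been evaluated
   yet (no recomputation) and all parents of v are in fast memory; v is then in fast
   memory.  Eviction is free; a value evicted without having been written
   is lost, so it can never be used again (this is exactly the write-before-evict
   requirement for values still needed). *)
fun step :: "nat \<Rightarrow> (nat \<times> nat) set \<Rightarrow> io_op \<Rightarrow> mstate \<Rightarrow> mstate option" where
  "step M E (Compute v) (F, S, C) =
     (if v \<notin> C \<and> parents E v \<subseteq> F \<and> card (insert v F) \<le> M
      then Some (insert v F, S, insert v C) else None)"
| "step M E (Read v) (F, S, C) =
     (if v \<in> S \<and> card (insert v F) \<le> M then Some (insert v F, S, C) else None)"
| "step M E (Write v) (F, S, C) =
     (if v \<in> F then Some (F, insert v S, C) else None)"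
| "step M E (Evict v) (F, S, C) =
     (if v \<in> F then Some (F - {v}, S, C) else None)"

fun run :: "nat \<Rightarrow> (nat \<times> nat) set \<Rightarrow> io_op list \<Rightarrow> mstate \<Rightarrow> mstate option" where
  "run M E [] st = Some st"
| "run M E (o1 # os) st = (case step M E o1 st of None \<Rightarrow> None | Some st' \<Rightarrow> run M E os st')"

definition valid_eval :: "nat \<Rightarrow> nat \<Rightarrow> (nat \<times> nat) set \<Rightarrow> io_op list \<Rightarrow> bool" where
  "valid_eval M n E ops \<longleftrightarrow>
     (\<forall>op \<in> set ops. case op of Compute v \<Rightarrow> v < n | Read v \<Rightarrow> v < n
                     | Write v \<Rightarrow> v < n | Evict v \<Rightarrow> v < n) \<and>
     (\<exists>F S. run M E ops ({}, {}, {}) = Some (F, S, {0..<n}))"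

fun is_io :: "io_op \<Rightarrow> bool" where
  "is_io (Read _) = True"
| "is_io (Write _) = True"
| "is_io (Compute _) = False"
| "is_io (Evict _) = False"

definition io_cost :: "io_op list \<Rightarrow> nat" where
  "io_cost ops = length (filter is_io ops)"

(* J*_G: minimum number of non-trivial I/Os over all valid evaluations
   (\<infinity> if there is no valid evaluation). *)
definition J_star :: "nat \<Rightarrow> nat \<Rightarrow> (nat \<times> nat) set \<Rightarrow> enat" where
  "J_star M n E = (INF ops \<in> {ops. valid_eval M n E ops}. enat (io_cost ops))"

definition adj :: "(nat \<times> nat) set \<Rightarrow> nat \<Rightarrow> nat \<Rightarrow> bool" where
  "adj E u v \<longleftrightarrow> u \<noteq> v \<and> ((u, v) \<in> E \<or> (v, u) \<in> E)"

definition adj_mat :: "nat \<Rightarrow> (nat \<times> nat) set \<Rightarrow> real mat" where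
  "adj_mat n E = mat n n (\<lambda>(i, j). if adj E i j then 1 else 0)"

definition deg_mat :: "nat \<Rightarrow> (nat \<times> nat) set \<Rightarrow> real mat" where
  "deg_mat n E = mat n n (\<lambda>(i, j). if i = j then real (card {w \<in> {0..<n}. adj E i w}) else 0)"

definition laplacian :: "nat \<Rightarrow> (nat \<times> nat) set \<Rightarrow> real mat" where
  "laplacian n E = deg_mat n E - adj_mat n E"

(* Eigenvalues (with multiplicity, as roots of the characteristic polynomial) in
   increasing order; eig_asc A i is \<lambda>_{i+1}(A) (0-based indexing). *)
definition eig_asc :: "real mat \<Rightarrow> nat \<Rightarrow> real" where
  "eig_asc A i = sorted_list_of_multiset (proots (char_poly A)) ! i"

end

theory Submission
  imports Defs "HOL-Combinatorics.List_Permutation"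
begin

(* Cut a schedule with J I/Os into k consecutive segments, the i-th of which evaluates a set V_i
   of exactly q = n div k new vertices.  A value carried by an edge entering or leaving V_i must
   be in fast memory at the start or the end of the segment, or be read or written during it; as
   every vertex has at most d out-edges, at most d (J_i + 2M) edges cross V_i, where J_i is the
   I/O count of the segment.  On the spectral side, the normalized indicator vectors of the
   disjoint sets V_i are orthonormal, so by Ky Fan's inequality the sum of the k smallest
   Laplacian eigenvalues is at most the sum of their Rayleigh quotients |cut V_i| / q.  Summing
   over the segments gives q * (lambda_1 + ... + lambda_k) <= d (J + 2kM). *)

section \<open>Spectral theorem and Ky Fan's inequality\<close>

lemma conjugate_of_real_mat_mult_vec:
  fixes A :: "real mat" and v :: "complex vec"
  assumes "A \<in> carrier_mat n n" and "v \<in> carrier_vec n"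
  shows "conjugate (map_mat complex_of_real A *\<^sub>v v) = map_mat complex_of_real A *\<^sub>v conjugate v"
  using assms by (intro eq_vecI) (auto simp: scalar_prod_def sum_conjugate)

lemma real_symmetric_eigenvalue_real:
  fixes A :: "real mat"
  assumes A: "A \<in> carrier_mat n n" and sym: "A\<^sup>T = A"
    and ev: "eigenvector (map_mat complex_of_real A) v z"
  shows "cnj z = z"
proof -
  let ?A = "map_mat complex_of_real A"
  have v: "v \<in> carrier_vec n" and v0: "v \<noteq> 0\<^sub>v n" and Av: "?A *\<^sub>v v = z \<cdot>\<^sub>v v"
    using ev A unfolding eigenvector_def by auto
  have symA: "?A\<^sup>T = ?A"
    by (simp add: map_mat_transpose sym)
  have "z * (v \<bullet>c v) = (?A *\<^sub>v v) \<bullet> conjugate v"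
    using v by (simp add: Av smult_scalar_prod_distrib[of _ n])
  also have "\<dots> = v \<bullet> (?A *\<^sub>v conjugate v)"
    using transpose_vec_mult_scalar[of ?A n n "conjugate v" v] A v symA by simp
  also have "\<dots> = cnj z * (v \<bullet>c v)"
    using v A by (simp add: conjugate_of_real_mat_mult_vec[symmetric] Av conjugate_smult_vec
        scalar_prod_smult_distrib[of _ n])
  finally have "(z - cnj z) * (v \<bullet>c v) = 0" by (simp add: algebra_simps)
  moreover have "v \<bullet>c v \<noteq> 0" using v v0 by simp
  ultimately show ?thesis by simp
qed

lemma real_symmetric_eigenvector_exists:
  fixes A :: "real mat"
  assumes A: "A \<in> carrier_mat n n" and sym: "A\<^sup>T = A" and n: "0 < n"
  obtains lam v where "eigenvector A v lam"
proof -
  let ?A = "map_mat complex_of_real A"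
  have A': "?A \<in> carrier_mat n n" using A by simp
  obtain zs where cp: "char_poly ?A = (\<Prod>z\<leftarrow>zs. [:- z, 1:])" and "length zs = n"
    using char_poly_factorized[OF A'] by blast
  then obtain z where "z \<in> set zs" using n by (cases zs) auto
  then have "poly (char_poly ?A) z = 0" unfolding cp by (induction zs) auto
  then obtain v where "eigenvector ?A v z"
    using eigenvalue_root_char_poly[OF A'] unfolding eigenvalue_def by blast
  then have "z \<in> \<real>"
    using real_symmetric_eigenvalue_real[OF A sym] by (simp add: Reals_cnj_iff)
  then have "poly (char_poly ?A) z = of_real (poly (char_poly A) (Re z))"
    by (simp add: of_real_hom.char_poly_hom[OF A] of_real_Re flip: of_real_hom.poly_map_poly)
  then have "eigenvalue A (Re z)"
    using \<open>poly (char_poly ?A) z = 0\<close> eigenvalue_root_char_poly[OF A] by simp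
  then show ?thesis using that unfolding eigenvalue_def by blast
qed

lemma householder_reflection:
  fixes v :: "real vec"
  assumes v: "v \<in> carrier_vec n" and vv: "v \<bullet> v = 1"
  obtains H where "H \<in> carrier_mat n n" "H\<^sup>T = H" "H * H = 1\<^sub>m n" "H *\<^sub>v unit_vec n 0 = v"
proof (cases "v = unit_vec n 0")
  case True
  then show ?thesis using that[of "1\<^sub>m n"] by simp
next
  case False
  have n: "0 < n" using v vv by (cases n) (auto simp: scalar_prod_def)
  define w where "w = v - unit_vec n 0"
  have w: "w \<in> carrier_vec n" using v by (simp add: w_def)
  have "w \<noteq> 0\<^sub>v n"
  proof
    assume w0: "w = 0\<^sub>v n"
    have "v $ i = unit_vec n 0 $ i" if "i < n" for i
      using arg_cong[OF w0, of "\<lambda>x. x $ i"] that v by (simp add: w_def)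
    then have "v = unit_vec n 0" using v by (intro eq_vecI) auto
    then show False using False by contradiction
  qed
  then have "w \<bullet> w \<noteq> 0" using conjugate_square_eq_0_vec[OF w] by simp
  moreover have ww: "w \<bullet> w = 2 * (1 - v $ 0)"
    using v vv n by (simp add: w_def minus_scalar_prod_distrib scalar_prod_minus_distrib
        comm_scalar_prod[of "unit_vec n 0" n v])
  ultimately have v0: "1 - v $ 0 \<noteq> 0" by simp
  define c where "c = 1 / (1 - v $ 0)" \<comment> \<open>\<open>c = 2 / (w \<bullet> w)\<close>, so \<open>H\<close> is the reflection across \<open>w\<^sup>\<bottom>\<close>\<close>
  have cww: "c * (w \<bullet> w) = 2" using v0 by (simp add: ww c_def field_simps)
  have cw0: "c * w $ 0 = -1" using v0 v n by (simp add: c_def w_def field_simps)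
  define H where "H = mat n n (\<lambda>(i, j). of_bool (i = j) - c * w $ i * w $ j)"
  have H: "H \<in> carrier_mat n n" by (simp add: H_def)
  have HT: "H\<^sup>T = H" by (auto simp: H_def)
  have row: "row H i = unit_vec n i - (c * w $ i) \<cdot>\<^sub>v w" if "i < n" for i
    using that w by (intro eq_vecI) (auto simp: H_def)
  have "H * H = 1\<^sub>m n"
  proof (rule eq_matI)
    fix i j assume "i < dim_row (1\<^sub>m n)" "j < dim_col (1\<^sub>m n)"
    then have ij: "i < n" "j < n" by auto
    have "(H * H) $$ (i, j) = row H i \<bullet> row H j"
      using ij H by (metis HT index_mult_mat(1) carrier_matD row_transpose)
    also have "\<dots> = of_bool (i = j) - 2 * c * w $ i * w $ j + c * c * w $ i * w $ j * (w \<bullet> w)"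
      using ij w by (simp add: row minus_scalar_prod_distrib[of _ n] scalar_prod_minus_distrib[of _ n]
          smult_scalar_prod_distrib[of _ n] scalar_prod_smult_distrib[of _ n] algebra_simps)
    also have "\<dots> = of_bool (i = j)"
      using cww by (simp add: algebra_simps)
    finally show "(H * H) $$ (i, j) = 1\<^sub>m n $$ (i, j)" using ij by simp
  qed (auto simp: H_def)
  moreover have "H *\<^sub>v unit_vec n 0 = v"
  proof (rule eq_vecI)
    fix i assume "i < dim_vec v"
    then have i: "i < n" using v by simp
    then have "(H *\<^sub>v unit_vec n 0) $ i = of_bool (i = 0) - c * w $ 0 * w $ i"
      using n by (simp add: H_def row_def)
    also have "\<dots> = v $ i" using cw0 i v by (simp add: w_def)
    finally show "(H *\<^sub>v unit_vec n 0) $ i = v $ i" .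
  qed (use v H in auto)
  ultimately show ?thesis using that H HT by blast
qed

lemma symmetric_mat_eigenvector_unit_block:
  fixes B :: "'a :: comm_ring_1 mat"
  assumes B: "B \<in> carrier_mat (Suc n) (Suc n)" and sym: "B\<^sup>T = B"
    and ev: "B *\<^sub>v unit_vec (Suc n) 0 = lam \<cdot>\<^sub>v unit_vec (Suc n) 0"
  shows "B = four_block_mat (mat 1 1 (\<lambda>_. lam)) (0\<^sub>m 1 n) (0\<^sub>m n 1)
               (mat n n (\<lambda>(i, j). B $$ (Suc i, Suc j)))"
proof -
  have col0: "B $$ (i, 0) = (if i = 0 then lam else 0)" if "i < Suc n" for i
    using arg_cong[OF ev, of "\<lambda>v. v $ i"] that B by (auto simp: row_def)
  have row0: "B $$ (0, j) = (if j = 0 then lam else 0)" if "j < Suc n" for j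
    using arg_cong[OF sym, of "\<lambda>A. A $$ (0, j)"] col0[OF that] that B by simp
  show ?thesis
    using B col0 row0 by (intro eq_matI) (auto simp: less_Suc_eq_0_disj)
qed

lemma real_symmetric_orthogonally_diagonalizable:
  fixes A :: "real mat"
  assumes "A \<in> carrier_mat n n" and "A\<^sup>T = A"
  obtains Q mu where "Q \<in> carrier_mat n n" "Q\<^sup>T * Q = 1\<^sub>m n" "Q\<^sup>T * A * Q = mat_diag n mu"
  using assms
proof (induction n arbitrary: A thesis)
  case 0
  show ?case
    by (rule "0.prems"(1)[of "1\<^sub>m 0" "\<lambda>_. 0"]) (use "0.prems"(2) in \<open>auto intro!: eq_matI simp: mat_diag_def\<close>)
next
  case (Suc n)
  let ?N = "Suc n" and ?e = "unit_vec (Suc n) 0"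
  have A: "A \<in> carrier_mat ?N ?N" and sym: "A\<^sup>T = A" by fact+
  obtain lam u where "eigenvector A u lam"
    using real_symmetric_eigenvector_exists[OF A sym] by blast
  then have u: "u \<in> carrier_vec ?N" "u \<noteq> 0\<^sub>v ?N" "A *\<^sub>v u = lam \<cdot>\<^sub>v u"
    using A by (auto simp: eigenvector_def)
  then have "u \<bullet> u > 0" using conjugate_square_greater_0_vec[OF u(1)] by simp
  define v where "v = (1 / sqrt (u \<bullet> u)) \<cdot>\<^sub>v u"
  have v: "v \<in> carrier_vec ?N" and "v \<bullet> v = 1"
    using u \<open>u \<bullet> u > 0\<close> by (auto simp: v_def smult_scalar_prod_distrib[of _ ?N]
        scalar_prod_smult_distrib[of _ ?N])
  have Av: "A *\<^sub>v v = lam \<cdot>\<^sub>v v"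
    using u A by (simp add: v_def mult_mat_vec smult_smult_assoc mult.commute)
  obtain H where H: "H \<in> carrier_mat ?N ?N" and HT: "H\<^sup>T = H" and HH: "H * H = 1\<^sub>m ?N"
    and He: "H *\<^sub>v ?e = v"
    using householder_reflection[OF v \<open>v \<bullet> v = 1\<close>] by blast
  define B where "B = H * A * H"
  have B: "B \<in> carrier_mat ?N ?N" using H A by (simp add: B_def)
  have "B\<^sup>T = H\<^sup>T * (A\<^sup>T * H\<^sup>T)"
    using H A by (simp add: B_def transpose_mult[of _ ?N ?N _ ?N])
  then have "B\<^sup>T = B"
    using H A by (simp add: HT sym B_def assoc_mult_mat[of _ ?N ?N _ ?N _ ?N])
  moreover have "B *\<^sub>v ?e = lam \<cdot>\<^sub>v ?e"
  proof -
    have "H *\<^sub>v v = ?e"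
      using H HH by (simp flip: He add: assoc_mult_mat_vec[of _ ?N ?N _ ?N, symmetric])
    then show ?thesis
      using H A v by (simp add: B_def assoc_mult_mat_vec[of _ ?N ?N _ ?N] He Av mult_mat_vec)
  qed
  ultimately have Bblock: "B = four_block_mat (mat 1 1 (\<lambda>_. lam)) (0\<^sub>m 1 n) (0\<^sub>m n 1)
      (mat n n (\<lambda>(i, j). B $$ (Suc i, Suc j)))" (is "B = four_block_mat ?L _ _ ?B'")
    by (rule symmetric_mat_eigenvector_unit_block[OF B])
  have "B $$ (Suc j, Suc i) = B $$ (Suc i, Suc j)" if "i < n" "j < n" for i j
    using arg_cong[OF \<open>B\<^sup>T = B\<close>, of "\<lambda>A. A $$ (Suc i, Suc j)"] that B by simp
  then have "?B'\<^sup>T = ?B'" by (intro eq_matI) auto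
  moreover have "?B' \<in> carrier_mat n n" by simp
  ultimately obtain Q' mu' where Q': "Q' \<in> carrier_mat n n" "Q'\<^sup>T * Q' = 1\<^sub>m n"
    and Q'B': "Q'\<^sup>T * ?B' * Q' = mat_diag n mu'"
    using Suc.IH by blast
  define K where "K = four_block_mat (1\<^sub>m 1) (0\<^sub>m 1 n) (0\<^sub>m n 1) Q'"
  have K: "K \<in> carrier_mat ?N ?N"
    using four_block_carrier_mat[of "1\<^sub>m 1" 1 1 Q' n n] Q' by (simp add: K_def)
  have KT: "K\<^sup>T = four_block_mat (1\<^sub>m 1) (0\<^sub>m 1 n) (0\<^sub>m n 1) Q'\<^sup>T"
    unfolding K_def using Q' by (subst transpose_four_block_mat) auto
  have "K\<^sup>T * K = 1\<^sub>m ?N"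
    unfolding KT unfolding K_def using Q' by (subst mult_four_block_mat[of _ 1 1 _ n _ n _ _ 1 _ n]) auto
  have "K\<^sup>T * B * K = four_block_mat ?L (0\<^sub>m 1 n) (0\<^sub>m n 1) (Q'\<^sup>T * ?B' * Q')"
    unfolding KT unfolding K_def using Q'
    by (subst Bblock, subst mult_four_block_mat[of _ 1 1 _ n _ n _ _ 1 _ n], auto,
        subst mult_four_block_mat[of _ 1 1 _ n _ n _ _ 1 _ n], auto)
  also have "\<dots> = mat_diag ?N (\<lambda>i. if i = 0 then lam else mu' (i - 1))"
    unfolding Q'B' by (intro eq_matI) (auto simp: mat_diag_def)
  finally have KBK: "K\<^sup>T * B * K = mat_diag ?N (\<lambda>i. if i = 0 then lam else mu' (i - 1))" .
  show ?case
  proof (rule Suc.prems(1))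
    show "H * K \<in> carrier_mat ?N ?N" using H K by simp
    have QT: "(H * K)\<^sup>T = K\<^sup>T * H" using H K by (simp add: transpose_mult[of _ ?N ?N] HT)
    have "(H * K)\<^sup>T * (H * K) = K\<^sup>T * (H * H) * K"
      using H K by (simp add: QT assoc_mult_mat[of _ ?N ?N _ ?N _ ?N])
    then show "(H * K)\<^sup>T * (H * K) = 1\<^sub>m ?N"
      using K HH \<open>K\<^sup>T * K = 1\<^sub>m ?N\<close> by simp
    show "(H * K)\<^sup>T * A * (H * K) = mat_diag ?N (\<lambda>i. if i = 0 then lam else mu' (i - 1))"
      using H K A by (simp add: QT B_def assoc_mult_mat[of _ ?N ?N _ ?N _ ?N] flip: KBK)
  qed
qed

lemma proots_prod_list_linear_factors: "proots (\<Prod>a\<leftarrow>xs. [:- a, 1:]) = mset (xs :: 'a :: idom list)"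
proof (induction xs)
  case (Cons a xs)
  have "(\<Prod>a\<leftarrow>xs. [:- a, 1:]) \<noteq> 0" by (auto simp: prod_list_zero_iff)
  then have "proots ([:- a, 1:] * (\<Prod>a\<leftarrow>xs. [:- a, 1:])) = {#a#} + mset xs"
    by (subst proots_mult) (auto simp: Cons.IH)
  then show ?case by simp
qed simp

lemma eig_asc_similar_mat_diag:
  assumes "similar_mat A (mat_diag n mu)"
  shows "eig_asc A i = sort (map mu [0..<n]) ! i"
proof -
  have "diag_mat (mat_diag n mu) = map mu [0..<n]"
    by (simp add: diag_mat_def mat_diag_def list_eq_iff_nth_eq)
  then have "char_poly A = (\<Prod>a\<leftarrow>map mu [0..<n]. [:- a, 1:])"
    using char_poly_upper_triangular[of "mat_diag n mu" n]
    by (simp add: char_poly_similar[OF assms] upper_triangular_def mat_diag_def)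
  then have "proots (char_poly A) = mset (map mu [0..<n])"
    by (simp only: proots_prod_list_linear_factors)
  then show ?thesis unfolding eig_asc_def by (simp only: sorted_list_of_multiset_mset)
qed

lemma sorted_prefix_sum_le_weighted_sum:
  fixes s :: "real list" and w :: "nat \<Rightarrow> real"
  assumes s: "sorted s" "length s = n"
    and w: "\<And>j. j < n \<Longrightarrow> 0 \<le> w j \<and> w j \<le> 1" and ws: "(\<Sum>j<n. w j) = real k"
    and k: "k \<le> n"
  shows "(\<Sum>i<k. s ! i) \<le> (\<Sum>j<n. s ! j * w j)"
proof -
  obtain c where lo: "\<And>j. j < k \<Longrightarrow> s ! j \<le> c" and hi: "\<And>j. k \<le> j \<Longrightarrow> j < n \<Longrightarrow> c \<le> s ! j"
  proof (cases k)
    case 0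
    then show ?thesis using that[of "s ! 0"] s by (auto intro: sorted_nth_mono)
  next
    case (Suc k')
    show ?thesis
      by (rule that[of "s ! k'"]) (use s k Suc in \<open>auto intro!: sorted_nth_mono simp: less_Suc_eq_le\<close>)
  qed
  have split: "(\<Sum>j<n. f j) = (\<Sum>j<k. f j) + (\<Sum>j\<in>{k..<n}. f j)" for f :: "nat \<Rightarrow> real"
    using k by (simp add: lessThan_atLeast0 sum.atLeastLessThan_concat)
  have "(\<Sum>j<k. c * (w j - 1)) \<le> (\<Sum>j<k. s ! j * w j - s ! j)"
  proof (rule sum_mono)
    fix j assume "j \<in> {..<k}"
    then have "0 \<le> (s ! j - c) * (w j - 1)"
      using lo w[of j] k by (intro mult_nonpos_nonpos) auto
    then show "c * (w j - 1) \<le> s ! j * w j - s ! j" by (simp add: algebra_simps)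
  qed
  moreover have "(\<Sum>j\<in>{k..<n}. c * w j) \<le> (\<Sum>j\<in>{k..<n}. s ! j * w j)"
    using hi w by (intro sum_mono mult_right_mono) auto
  moreover have "(\<Sum>j<k. c * (w j - 1)) + (\<Sum>j\<in>{k..<n}. c * w j) = c * (\<Sum>j<n. w j) - c * k"
    unfolding split[of w] by (simp add: sum_distrib_left sum_subtractf algebra_simps)
  ultimately show ?thesis
    unfolding split[of "\<lambda>j. s ! j * w j"] ws by (simp add: sum_subtractf)
qed

lemma sort_prefix_sum_le_weighted_sum:
  fixes mu w :: "nat \<Rightarrow> real"
  assumes w: "\<And>j. j < n \<Longrightarrow> 0 \<le> w j \<and> w j \<le> 1" and ws: "(\<Sum>j<n. w j) = real k"
    and k: "k \<le> n"
  shows "(\<Sum>i<k. sort (map mu [0..<n]) ! i) \<le> (\<Sum>j<n. mu j * w j)"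
proof -
  let ?s = "sort (map mu [0..<n])"
  obtain f where f: "bij_betw f {..<n} {..<n}" and "\<forall>i<n. ?s ! i = map mu [0..<n] ! f i"
    using permutation_Ex_bij[of ?s "map mu [0..<n]"] by auto
  then have fs: "?s ! i = mu (f i)" if "i < n" for i
    using that by (auto dest: bij_betwE)
  have "(\<Sum>j<n. mu j * w j) = (\<Sum>i<n. ?s ! i * w (f i))"
    using fs by (simp add: sum.reindex_bij_betw[OF f, of "\<lambda>j. mu j * w j", symmetric])
  moreover have "(\<Sum>i<k. ?s ! i) \<le> (\<Sum>i<n. ?s ! i * w (f i))"
  proof (rule sorted_prefix_sum_le_weighted_sum[OF _ _ _ _ k])
    show "(\<Sum>i<n. w (f i)) = real k" using sum.reindex_bij_betw[OF f, of w] ws by simp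
  qed (use w f in \<open>auto dest: bij_betwE\<close>)
  ultimately show ?thesis by simp
qed

lemma quadratic_form_mat_diag_conj:
  fixes Q :: "'a :: comm_ring_1 mat"
  assumes Q: "Q \<in> carrier_mat n n" and x: "x \<in> carrier_vec n"
  shows "x \<bullet> ((Q * mat_diag n mu * Q\<^sup>T) *\<^sub>v x) = (\<Sum>j<n. mu j * (col Q j \<bullet> x)\<^sup>2)"
proof -
  define y where "y = Q\<^sup>T *\<^sub>v x"
  have y: "y \<in> carrier_vec n" and yj: "\<And>j. j < n \<Longrightarrow> y $ j = col Q j \<bullet> x"
    using Q x by (auto simp: y_def)
  have "x \<bullet> ((Q * mat_diag n mu * Q\<^sup>T) *\<^sub>v x) = x \<bullet> (Q *\<^sub>v (mat_diag n mu *\<^sub>v y))"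
    using Q x by (simp add: y_def assoc_mult_mat_vec[of _ n n _ n])
  also have "\<dots> = y \<bullet> (mat_diag n mu *\<^sub>v y)"
    using transpose_vec_mult_scalar[OF Q mult_mat_vec_carrier[OF mat_diag_dim y] x]
    by (simp add: y_def)
  also have "\<dots> = (\<Sum>j<n. mu j * (y $ j)\<^sup>2)"
  proof -
    have "row (mat_diag n mu) j = mu j \<cdot>\<^sub>v unit_vec n j" if "j < n" for j
      using that by (intro eq_vecI) (auto simp: mat_diag_def)
    then have "mat_diag n mu *\<^sub>v y = vec n (\<lambda>j. mu j * y $ j)"
      using y by (intro eq_vecI) (auto simp: smult_scalar_prod_distrib[of _ n] mat_diag_def)
    then show ?thesis
      using y by (simp add: scalar_prod_def lessThan_atLeast0 power2_eq_square algebra_simps)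
  qed
  finally show ?thesis by (simp add: yj)
qed

lemma bessel_inequality:
  fixes q :: "real vec" and x :: "nat \<Rightarrow> real vec"
  assumes q: "q \<in> carrier_vec n" and x: "\<And>i. i < k \<Longrightarrow> x i \<in> carrier_vec n"
    and orth: "\<And>i j. i < k \<Longrightarrow> j < k \<Longrightarrow> x i \<bullet> x j = of_bool (i = j)"
  shows "(\<Sum>i<k. (q \<bullet> x i)\<^sup>2) \<le> q \<bullet> q"
proof -
  define a where "a i = q \<bullet> x i" for i
  define p where "p t = (\<Sum>i<k. a i * x i $ t)" for t
  have sprod: "v \<bullet> w = (\<Sum>t<n. v $ t * w $ t)" if "v \<in> carrier_vec n" "w \<in> carrier_vec n" for v w
    using that by (simp add: scalar_prod_def lessThan_atLeast0)
  have qp: "(\<Sum>t<n. q $ t * p t) = (\<Sum>i<k. a i * a i)"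
  proof -
    have "(\<Sum>t<n. q $ t * p t) = (\<Sum>i<k. a i * (\<Sum>t<n. q $ t * x i $ t))"
      by (simp add: p_def sum_distrib_left sum.swap[of _ "{..<n}"] algebra_simps)
    then show ?thesis using q x by (simp add: a_def sprod)
  qed
  have pp: "(\<Sum>t<n. p t * p t) = (\<Sum>i<k. a i * a i)"
  proof -
    have "(\<Sum>t<n. p t * p t) = (\<Sum>i<k. \<Sum>j<k. a i * a j * (\<Sum>t<n. x i $ t * x j $ t))"
      by (simp add: p_def sum_distrib_left sum_distrib_right sum.swap[of _ "{..<n}"] algebra_simps)
    also have "\<dots> = (\<Sum>i<k. \<Sum>j<k. if i = j then a i * a j else 0)"
      using x orth by (intro sum.cong refl) (simp add: sprod[symmetric])
    finally show ?thesis by simp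
  qed
  have "0 \<le> (\<Sum>t<n. (q $ t - p t) * (q $ t - p t))" by (simp add: sum_nonneg)
  also have "\<dots> = (\<Sum>t<n. q $ t * q $ t) - 2 * (\<Sum>t<n. q $ t * p t) + (\<Sum>t<n. p t * p t)"
    by (simp add: sum_subtractf sum.distrib sum_distrib_left algebra_simps)
  also have "\<dots> = q \<bullet> q - (\<Sum>i<k. (q \<bullet> x i)\<^sup>2)"
    using q by (simp add: qp pp sprod a_def power2_eq_square)
  finally show ?thesis by simp
qed

lemma sum_eig_asc_le_sum_quadratic_forms:
  fixes A :: "real mat" and x :: "nat \<Rightarrow> real vec"
  assumes A: "A \<in> carrier_mat n n" and sym: "A\<^sup>T = A"
    and x: "\<And>i. i < k \<Longrightarrow> x i \<in> carrier_vec n"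
    and orth: "\<And>i j. i < k \<Longrightarrow> j < k \<Longrightarrow> x i \<bullet> x j = of_bool (i = j)"
    and k: "k \<le> n"
  shows "(\<Sum>i<k. eig_asc A i) \<le> (\<Sum>i<k. x i \<bullet> (A *\<^sub>v x i))"
proof -
  obtain Q mu where Q: "Q \<in> carrier_mat n n" and QQ: "Q\<^sup>T * Q = 1\<^sub>m n"
    and QAQ: "Q\<^sup>T * A * Q = mat_diag n mu"
    using real_symmetric_orthogonally_diagonalizable[OF A sym] by blast
  have QQ': "Q * Q\<^sup>T = 1\<^sub>m n"
    using mat_mult_left_right_inverse[OF _ Q QQ] Q by simp
  have A_eq: "A = Q * mat_diag n mu * Q\<^sup>T"
  proof -
    have "Q * mat_diag n mu * Q\<^sup>T = (Q * Q\<^sup>T) * A * (Q * Q\<^sup>T)"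
      using Q A by (simp add: QAQ[symmetric] assoc_mult_mat[of _ n n _ n _ n])
    then show ?thesis using A by (simp add: QQ')
  qed
  have "similar_mat A (mat_diag n mu)"
    by (rule similar_matI[of _ _ Q "Q\<^sup>T" n]) (use A Q QQ QQ' A_eq in auto)
  then have eig: "eig_asc A i = sort (map mu [0..<n]) ! i" for i
    by (rule eig_asc_similar_mat_diag)
  define w where "w j = (\<Sum>i<k. (col Q j \<bullet> x i)\<^sup>2)" for j
  have "0 \<le> w j \<and> w j \<le> 1" if "j < n" for j
  proof -
    have "w j \<le> col Q j \<bullet> col Q j"
      unfolding w_def using Q that by (intro bessel_inequality[OF _ x orth]) auto
    also have "\<dots> = 1" using arg_cong[OF QQ, of "\<lambda>B. B $$ (j, j)"] Q that by simp
    finally show ?thesis by (simp add: w_def sum_nonneg)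
  qed
  moreover have "(\<Sum>j<n. w j) = real k"
  proof -
    have "x i \<bullet> x i = (\<Sum>j<n. (col Q j \<bullet> x i)\<^sup>2)" if "i < k" for i
      using quadratic_form_mat_diag_conj[OF Q x[OF that], of "\<lambda>_. 1"] Q x[OF that] QQ' by simp
    then have "(\<Sum>i<k. \<Sum>j<n. (col Q j \<bullet> x i)\<^sup>2) = (\<Sum>i<k. 1)"
      using orth by (intro sum.cong) auto
    then show ?thesis unfolding w_def by (subst sum.swap) simp
  qed
  ultimately have "(\<Sum>i<k. eig_asc A i) \<le> (\<Sum>j<n. mu j * w j)"
    unfolding eig by (intro sort_prefix_sum_le_weighted_sum[OF _ _ k]) auto
  also have "\<dots> = (\<Sum>i<k. x i \<bullet> (A *\<^sub>v x i))"
    using Q x by (simp add: w_def A_eq quadratic_form_mat_diag_conj sum_distrib_left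
        sum.swap[of _ "{..<n}"])
  finally show ?thesis .
qed

section \<open>Laplacian quadratic forms of indicator vectors\<close>

lemma laplacian_carrier: "laplacian n E \<in> carrier_mat n n"
  unfolding laplacian_def deg_mat_def adj_mat_def by (rule minus_carrier_mat) simp

lemma laplacian_transpose: "(laplacian n E)\<^sup>T = laplacian n E"
  by (rule eq_matI) (auto simp: laplacian_def deg_mat_def adj_mat_def adj_def)

definition cut_pairs :: "nat \<Rightarrow> (nat \<times> nat) set \<Rightarrow> nat set \<Rightarrow> (nat \<times> nat) set" where
  "cut_pairs n E V = {(u, w). u \<in> V \<and> w < n \<and> w \<notin> V \<and> adj E u w}"

definition out_edges :: "(nat \<times> nat) set \<Rightarrow> nat set \<Rightarrow> (nat \<times> nat) set" where
  "out_edges E V = {(u, w) \<in> E. u \<in> V \<and> w \<notin> V}"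

definition in_edges :: "(nat \<times> nat) set \<Rightarrow> nat set \<Rightarrow> (nat \<times> nat) set" where
  "in_edges E V = {(u, w) \<in> E. u \<notin> V \<and> w \<in> V}"

lemma card_cut_pairs_le:
  assumes "finite E"
  shows "card (cut_pairs n E V) \<le> card (out_edges E V) + card (in_edges E V)"
proof -
  have "cut_pairs n E V \<subseteq> out_edges E V \<union> prod.swap ` in_edges E V"
    by (force simp: cut_pairs_def out_edges_def in_edges_def adj_def)
  moreover have "finite (out_edges E V)" "finite (in_edges E V)"
    by (rule finite_subset[OF _ assms], force simp: out_edges_def in_edges_def)+
  ultimately have "card (cut_pairs n E V) \<le> card (out_edges E V) + card (prod.swap ` in_edges E V)"
    by (meson card_Un_le card_mono finite_UnI finite_imageI le_trans)
  also have "card (prod.swap ` in_edges E V) \<le> card (in_edges E V)"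
    using \<open>finite (in_edges E V)\<close> by (rule card_image_le)
  finally show ?thesis by simp
qed

lemma laplacian_quadratic_form_indicator:
  fixes s :: real
  assumes V: "V \<subseteq> {0..<n}"
  defines "x \<equiv> vec n (\<lambda>i. if i \<in> V then s else 0)"
  shows "x \<bullet> (laplacian n E *\<^sub>v x) = s\<^sup>2 * card (cut_pairs n E V)"
proof -
  define N where "N u = {w. w < n \<and> adj E u w}" for u
  have L: "row (laplacian n E) u = real (card (N u)) \<cdot>\<^sub>v unit_vec n u - vec n (\<lambda>w. of_bool (adj E u w))"
    if "u < n" for u
    using that by (intro eq_vecI) (auto simp: laplacian_def deg_mat_def adj_mat_def N_def atLeast0LessThan)
  have x: "x \<in> carrier_vec n" by (simp add: x_def)
  have adj_x: "vec n (\<lambda>w. of_bool (adj E u w)) \<bullet> x = s * card (N u \<inter> V)" for u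
  proof -
    have "vec n (\<lambda>w. of_bool (adj E u w)) \<bullet> x
        = (\<Sum>w\<in>{0..<n}. of_bool (adj E u w) * (if w \<in> V then s else 0))"
      by (simp add: scalar_prod_def x_def)
    also have "\<dots> = (\<Sum>w\<in>{0..<n}. if w \<in> N u \<inter> V then s else 0)"
      by (rule sum.cong) (auto simp: N_def)
    also have "\<dots> = s * card (N u \<inter> V)"
    proof -
      have "{w \<in> {0..<n}. w \<in> N u \<inter> V} = N u \<inter> V" using V by (auto simp: N_def)
      then show ?thesis by (simp flip: sum.inter_filter)
    qed
    finally show ?thesis .
  qed
  have Lx: "(laplacian n E *\<^sub>v x) $ u = s * card (N u - V)" if "u \<in> V" for u
  proof -
    have u: "u < n" using that V by auto
    have "finite (N u)" by (simp add: N_def)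
    then have card_N: "card (N u) = card (N u \<inter> V) + card (N u - V)"
      by (metis card_Int_Diff)
    have "(laplacian n E *\<^sub>v x) $ u = row (laplacian n E) u \<bullet> x"
      using u laplacian_carrier[of n E] by simp
    also have "\<dots> = card (N u) * x $ u - s * card (N u \<inter> V)"
      using u x by (simp add: L adj_x minus_scalar_prod_distrib[of _ n] smult_scalar_prod_distrib[of _ n])
    also have "\<dots> = s * card (N u - V)"
      using u that by (simp add: x_def card_N algebra_simps)
    finally show ?thesis .
  qed
  have "x \<bullet> (laplacian n E *\<^sub>v x) = (\<Sum>u\<in>V. s * (s * card (N u - V)))"
  proof -
    have "x \<bullet> (laplacian n E *\<^sub>v x) = (\<Sum>u\<in>{0..<n}. if u \<in> V then s * (laplacian n E *\<^sub>v x) $ u else 0)"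
      by (auto simp: scalar_prod_def x_def laplacian_carrier[of n E, THEN carrier_matD(1)] intro!: sum.cong)
    also have "\<dots> = (\<Sum>u\<in>V. s * (s * card (N u - V)))"
      using V by (simp add: sum.If_cases Int_absorb1 Lx)
    finally show ?thesis .
  qed
  also have "\<dots> = s\<^sup>2 * (\<Sum>u\<in>V. card (N u - V))"
    by (simp add: sum_distrib_left power2_eq_square mult.assoc)
  also have "(\<Sum>u\<in>V. card (N u - V)) = card (cut_pairs n E V)"
  proof -
    have "cut_pairs n E V = Sigma V (\<lambda>u. N u - V)" by (auto simp: cut_pairs_def N_def)
    then show ?thesis
      using V by (simp add: card_SigmaI N_def finite_subset)
  qed
  finally show ?thesis .
qed

definition unit_indicator :: "nat \<Rightarrow> nat set \<Rightarrow> real vec" where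
  "unit_indicator n V = vec n (\<lambda>i. if i \<in> V then 1 / sqrt (card V) else 0)"

lemma unit_indicator_inner_self:
  assumes "V \<subseteq> {0..<n}" and "V \<noteq> {}"
  shows "unit_indicator n V \<bullet> unit_indicator n V = 1"
proof -
  have "finite V" using assms(1) finite_subset by blast
  have "unit_indicator n V \<bullet> unit_indicator n V = (\<Sum>i\<in>{0..<n}. if i \<in> V then 1 / card V else 0)"
    by (auto simp: unit_indicator_def scalar_prod_def intro!: sum.cong)
  also have "\<dots> = 1"
    using assms \<open>finite V\<close> by (simp add: sum.If_cases Int_absorb1)
  finally show ?thesis .
qed

lemma unit_indicator_inner_disjoint:
  assumes "V \<inter> W = {}"
  shows "unit_indicator n V \<bullet> unit_indicator n W = 0"
  using assms by (auto simp: unit_indicator_def scalar_prod_def intro!: sum.neutral)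

lemma sum_eig_asc_laplacian_le_ratio_cut:
  assumes k: "k \<le> n" and V: "\<And>i. i < k \<Longrightarrow> V i \<subseteq> {0..<n}" "\<And>i. i < k \<Longrightarrow> V i \<noteq> {}"
    and disj: "\<And>i j. i < k \<Longrightarrow> j < k \<Longrightarrow> i \<noteq> j \<Longrightarrow> V i \<inter> V j = {}"
  shows "(\<Sum>i<k. eig_asc (laplacian n E) i) \<le> (\<Sum>i<k. card (cut_pairs n E (V i)) / card (V i))"
proof -
  let ?x = "\<lambda>i. unit_indicator n (V i)"
  have "(\<Sum>i<k. eig_asc (laplacian n E) i) \<le> (\<Sum>i<k. ?x i \<bullet> (laplacian n E *\<^sub>v ?x i))"
  proof (rule sum_eig_asc_le_sum_quadratic_forms[OF laplacian_carrier laplacian_transpose _ _ k])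
    show "?x i \<bullet> ?x j = of_bool (i = j)" if "i < k" "j < k" for i j
      using that V disj unit_indicator_inner_self unit_indicator_inner_disjoint by (cases "i = j") auto
  qed (simp add: unit_indicator_def)
  also have "\<dots> = (\<Sum>i<k. card (cut_pairs n E (V i)) / card (V i))"
    using V by (intro sum.cong refl)
      (simp add: unit_indicator_def laplacian_quadratic_form_indicator power_divide)
  finally show ?thesis .
qed

section \<open>Boundary edges of a segment of an evaluation\<close>

definition computed_by :: "io_op list \<Rightarrow> nat set" where
  "computed_by ops = {v. Compute v \<in> set ops}"

definition read_by :: "io_op list \<Rightarrow> nat set" where
  "read_by ops = {v. Read v \<in> set ops}"

definition written_by :: "io_op list \<Rightarrow> nat set" where
  "written_by ops = {v. Write v \<in> set ops}"

lemma finite_computed_by: "finite (computed_by ops)"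
  using finite_vimageI[of "set ops" Compute] by (simp add: computed_by_def vimage_def inj_def)

lemma finite_read_by: "finite (read_by ops)"
  using finite_vimageI[of "set ops" Read] by (simp add: read_by_def vimage_def inj_def)

lemma finite_written_by: "finite (written_by ops)"
  using finite_vimageI[of "set ops" Write] by (simp add: written_by_def vimage_def inj_def)

definition computed_between :: "io_op list \<Rightarrow> nat \<Rightarrow> nat \<Rightarrow> nat set" where
  "computed_between ops i j = computed_by (take j ops) - computed_by (take i ops)"

definition state_inv :: "nat \<Rightarrow> (nat \<times> nat) set \<Rightarrow> mstate \<Rightarrow> bool" where
  "state_inv M E st \<longleftrightarrow> (case st of (F, S, C) \<Rightarrow>
     finite F \<and> card F \<le> M \<and> F \<subseteq> C \<and> S \<subseteq> C \<and> finite C \<and> (\<forall>v\<in>C. parents E v \<subseteq> C))"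

lemma state_inv_init: "state_inv M E ({}, {}, {})"
  by (simp add: state_inv_def)

lemma step_state_inv: "step M E op st = Some st' \<Longrightarrow> state_inv M E st \<Longrightarrow> state_inv M E st'"
  by (cases st; cases op) (auto simp: state_inv_def split: if_splits intro: card_mono[THEN le_trans])

lemma run_Cons_SomeE:
  assumes "run M E (op # ops) st = Some st''"
  obtains st' where "step M E op st = Some st'" and "run M E ops st' = Some st''"
  using assms by (auto split: option.splits)

lemma run_append: "run M E (xs @ ys) st = Option.bind (run M E xs st) (run M E ys)"
  by (induction xs arbitrary: st) (auto split: option.splits)

lemma run_state_inv: "run M E ops st = Some st' \<Longrightarrow> state_inv M E st \<Longrightarrow> state_inv M E st'"
proof (induction ops arbitrary: st)
  case (Cons op ops)
  then show ?case by (metis run_Cons_SomeE step_state_inv)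
qed simp

lemma run_slow_and_computed:
  assumes "run M E ops (F, S, C) = Some (F', S', C')"
  shows "S' = S \<union> written_by ops \<and> C' = C \<union> computed_by ops"
  using assms
proof (induction ops arbitrary: F S C)
  case (Cons op ops)
  from Cons.prems obtain F1 S1 C1 where
    "step M E op (F, S, C) = Some (F1, S1, C1)" "run M E ops (F1, S1, C1) = Some (F', S', C')"
    by (metis run_Cons_SomeE prod_cases3)
  with Cons.IH show ?case
    by (cases op) (force simp: written_by_def computed_by_def split: if_splits)+
qed (simp_all add: written_by_def computed_by_def)

lemma run_parent_available:
  assumes "run M E ops (F, S, C) = Some st'" and "u \<in> C" and "Compute v \<in> set ops" and "(u, v) \<in> E"
  shows "u \<in> F \<or> Read u \<in> set ops"
  using assms
proof (induction ops arbitrary: F S C)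
  case (Cons op ops)
  from Cons.prems(1) obtain F1 S1 C1 where
    step: "step M E op (F, S, C) = Some (F1, S1, C1)" and run: "run M E ops (F1, S1, C1) = Some st'"
    by (metis run_Cons_SomeE prod_cases3)
  show ?case
  proof (cases "op = Compute v")
    case True
    then show ?thesis using step Cons.prems(4) by (auto simp: parents_def split: if_splits)
  next
    case False
    then have "u \<in> F1 \<or> Read u \<in> set ops"
      using Cons step run by (cases op) (auto split: if_splits)
    moreover have "u \<in> F1 \<Longrightarrow> u \<in> F \<or> op = Read u"
      using step Cons.prems(2) by (cases op) (auto split: if_splits)
    ultimately show ?thesis by auto
  qed
qed simp

lemma run_lost_value_unused:
  assumes "run M E ops (F, S, C) = Some st'" and "w \<in> C" and "w \<notin> F" and "w \<notin> S"
    and "Compute v \<in> set ops"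
  shows "(w, v) \<notin> E"
  using assms
proof (induction ops arbitrary: F S C)
  case (Cons op ops)
  from Cons.prems(1) obtain F1 S1 C1 where
    step: "step M E op (F, S, C) = Some (F1, S1, C1)" and run: "run M E ops (F1, S1, C1) = Some st'"
    by (metis run_Cons_SomeE prod_cases3)
  show ?case
  proof (cases "op = Compute v")
    case True
    then show ?thesis using step Cons.prems(3) by (auto simp: parents_def split: if_splits)
  next
    case False
    then show ?thesis
      using Cons step run by (cases op) (auto split: if_splits)
  qed
qed simp

lemma io_cost_append: "io_cost (xs @ ys) = io_cost xs + io_cost ys"
  by (simp add: io_cost_def)

lemma card_read_by_written_by_le: "card (read_by ops) + card (written_by ops) \<le> io_cost ops"
proof (induction ops)
  case (Cons op ops)
  have "read_by (op # ops) = (case op of Read v \<Rightarrow> insert v (read_by ops) | _ \<Rightarrow> read_by ops)"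
    and "written_by (op # ops) = (case op of Write v \<Rightarrow> insert v (written_by ops) | _ \<Rightarrow> written_by ops)"
    by (cases op; auto simp: read_by_def written_by_def)+
  then show ?case
    using Cons.IH by (cases op) (auto simp: io_cost_def card_insert_if finite_read_by finite_written_by)
qed (simp add: read_by_def written_by_def io_cost_def)

lemma card_edges_from_le:
  assumes "finite X" and "finite E" and "\<And>a. out_deg E a \<le> d"
  shows "card {(a, b) \<in> E. a \<in> X} \<le> d * card X"
proof -
  have "finite {b. (a, b) \<in> E}" for a
    using \<open>finite E\<close> by (rule finite_subset[rotated, OF finite_imageI[of E snd]]) force
  moreover have "{(a, b) \<in> E. a \<in> X} = Sigma X (\<lambda>a. {b. (a, b) \<in> E})" by auto
  ultimately have "card {(a, b) \<in> E. a \<in> X} = (\<Sum>a\<in>X. out_deg E a)"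
    using \<open>finite X\<close> by (simp add: card_SigmaI out_deg_def)
  also have "\<dots> \<le> d * card X"
    using sum_mono[of X "out_deg E" "\<lambda>_. d"] assms(3) by (simp add: mult.commute)
  finally show ?thesis .
qed

lemma run_in_edges_le:
  assumes run: "run M E c (F, S, C) = Some (F', S', C')" and inv: "state_inv M E (F, S, C)"
    and "finite E" and "\<And>a. out_deg E a \<le> d"
  shows "card (in_edges E (C' - C)) \<le> d * (M + card (read_by c))"
proof -
  have inv': "state_inv M E (F', S', C')" using run_state_inv[OF run inv] .
  have C': "C' = C \<union> computed_by c" using run_slow_and_computed[OF run] by simp
  have "in_edges E (C' - C) \<subseteq> {(a, b) \<in> E. a \<in> F \<union> read_by c}"
  proof (rule subrelI)
    fix a b assume ab: "(a, b) \<in> in_edges E (C' - C)"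
    then have "a \<in> C" using inv' by (auto simp: in_edges_def state_inv_def parents_def)
    moreover have "Compute b \<in> set c" using ab C' by (auto simp: in_edges_def computed_by_def)
    ultimately show "(a, b) \<in> {(a, b) \<in> E. a \<in> F \<union> read_by c}"
      using ab run_parent_available[OF run] by (auto simp: in_edges_def read_by_def)
  qed
  then have "card (in_edges E (C' - C)) \<le> card {(a, b) \<in> E. a \<in> F \<union> read_by c}"
    using \<open>finite E\<close> by (intro card_mono) (auto intro: finite_subset)
  also have "\<dots> \<le> d * card (F \<union> read_by c)"
    using inv assms(3,4) by (intro card_edges_from_le) (auto simp: state_inv_def finite_read_by)
  also have "\<dots> \<le> d * (M + card (read_by c))"
    using inv card_Un_le[of F "read_by c"] by (intro mult_le_mono2) (auto simp: state_inv_def)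
  finally show ?thesis .
qed

lemma run_out_edges_le:
  assumes run: "run M E c (F, S, C) = Some (F', S', C')"
    and rest: "run M E rest (F', S', C') = Some (F'', S'', C'')"
    and inv: "state_inv M E (F, S, C)" and EC: "E \<subseteq> C'' \<times> C''"
    and "finite E" and "\<And>a. out_deg E a \<le> d"
  shows "card (out_edges E (C' - C)) \<le> d * (M + card (written_by c))"
proof -
  have inv': "state_inv M E (F', S', C')" using run_state_inv[OF run inv] .
  have S'C': "S' = S \<union> written_by c" "C' = C \<union> computed_by c"
    using run_slow_and_computed[OF run] by auto
  have C'': "C'' = C' \<union> computed_by rest" using run_slow_and_computed[OF rest] by simp
  have "out_edges E (C' - C) \<subseteq> {(a, b) \<in> E. a \<in> F' \<union> written_by c}"
  proof (rule subrelI)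
    fix a b assume ab: "(a, b) \<in> out_edges E (C' - C)"
    then have "b \<notin> C'" using inv by (auto simp: out_edges_def state_inv_def parents_def)
    then have "Compute b \<in> set rest" using ab EC C'' by (auto simp: out_edges_def computed_by_def)
    moreover have "a \<in> C'" "a \<notin> S" using ab inv by (auto simp: out_edges_def state_inv_def)
    ultimately have "a \<in> F' \<or> a \<in> S'"
      using ab run_lost_value_unused[OF rest] by (auto simp: out_edges_def)
    then show "(a, b) \<in> {(a, b) \<in> E. a \<in> F' \<union> written_by c}"
      using ab \<open>a \<notin> S\<close> S'C' by (auto simp: out_edges_def)
  qed
  then have "card (out_edges E (C' - C)) \<le> card {(a, b) \<in> E. a \<in> F' \<union> written_by c}"
    using \<open>finite E\<close> by (intro card_mono) (auto intro: finite_subset)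
  also have "\<dots> \<le> d * card (F' \<union> written_by c)"
    using inv' assms(5,6) by (intro card_edges_from_le) (auto simp: state_inv_def finite_written_by)
  also have "\<dots> \<le> d * (M + card (written_by c))"
    using inv' card_Un_le[of F' "written_by c"] by (intro mult_le_mono2) (auto simp: state_inv_def)
  finally show ?thesis .
qed

lemma valid_eval_segment_boundary_le:
  assumes valid: "valid_eval M n E ops" and E: "E \<subseteq> {0..<n} \<times> {0..<n}"
    and d: "\<And>a. out_deg E a \<le> d" and "i \<le> j"
  defines "V \<equiv> computed_between ops i j"
  shows "card (out_edges E V) + card (in_edges E V) \<le> d * (io_cost (drop i (take j ops)) + 2 * M)"
proof -
  let ?c = "drop i (take j ops)" and ?init = "({}, {}, {}) :: mstate"
  obtain Ff Sf where "run M E (take j ops @ drop j ops) ?init = Some (Ff, Sf, {0..<n})"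
    using valid by (auto simp: valid_eval_def)
  then obtain st2 where run12: "run M E (take j ops) ?init = Some st2"
    and run3': "run M E (drop j ops) st2 = Some (Ff, Sf, {0..<n})"
    by (simp only: run_append bind_eq_Some_conv) blast
  have take_j: "take j ops = take i ops @ ?c"
    using \<open>i \<le> j\<close> by (metis append_take_drop_id min.absorb1 take_take)
  obtain st1 where run1': "run M E (take i ops) ?init = Some st1" and run2': "run M E ?c st1 = Some st2"
    using run12 by (subst (asm) take_j) (auto simp only: run_append bind_eq_Some_conv)
  obtain F1 S1 C1 F2 S2 C2 where st: "st1 = (F1, S1, C1)" "st2 = (F2, S2, C2)"
    by (cases st1, cases st2)
  note run1 = run1'[unfolded st] and run2 = run2'[unfolded st] and run3 = run3'[unfolded st]
  have V: "V = C2 - C1"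
    using run_slow_and_computed[OF run1] run_slow_and_computed[OF run12[unfolded st]]
    by (simp add: V_def computed_between_def)
  have inv: "state_inv M E (F1, S1, C1)" using run_state_inv[OF run1 state_inv_init] .
  have "finite E" using E finite_subset by blast
  have "card (out_edges E V) + card (in_edges E V)
      \<le> d * (M + card (written_by ?c)) + d * (M + card (read_by ?c))"
    unfolding V using run_out_edges_le[OF run2 run3 inv E \<open>finite E\<close> d]
      run_in_edges_le[OF run2 inv \<open>finite E\<close> d] by (rule add_mono)
  also have "\<dots> = d * (card (read_by ?c) + card (written_by ?c) + 2 * M)"
    by (simp add: algebra_simps)
  also have "\<dots> \<le> d * (io_cost ?c + 2 * M)"
    using card_read_by_written_by_le[of ?c] by simp
  finally show ?thesis .
qed

section \<open>Splitting an evaluation into segments\<close>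

lemma computed_by_take_mono: "i \<le> j \<Longrightarrow> computed_by (take i ops) \<subseteq> computed_by (take j ops)"
  using set_take_subset_set_take[of i j ops] by (auto simp: computed_by_def)

lemma valid_eval_computed_by:
  assumes "valid_eval M n E ops"
  shows "computed_by ops = {0..<n}"
  using assms run_slow_and_computed by (fastforce simp: valid_eval_def)

lemma computed_between_subset:
  assumes "valid_eval M n E ops"
  shows "computed_between ops i j \<subseteq> {0..<n}"
  using valid_eval_computed_by[OF assms] set_take_subset[of j ops]
  by (auto simp: computed_between_def computed_by_def)

lemma computed_between_disjoint:
  "j \<le> i' \<Longrightarrow> computed_between ops i j \<inter> computed_between ops i' j' = {}"
  using computed_by_take_mono[of j i' ops] by (auto simp: computed_between_def)

lemma card_computed_between:
  "i \<le> j \<Longrightarrow>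
    card (computed_between ops i j) = card (computed_by (take j ops)) - card (computed_by (take i ops))"
  by (simp add: computed_between_def card_Diff_subset finite_computed_by computed_by_take_mono)

lemma card_computed_by_take_Suc:
  "card (computed_by (take (Suc j) ops)) \<le> Suc (card (computed_by (take j ops)))"
proof (cases "j < length ops")
  case True
  have "computed_by (take (Suc j) ops) \<subseteq> computed_by (take j ops) \<union> computed_by [ops ! j]"
    unfolding take_Suc_conv_app_nth[OF True] by (auto simp: computed_by_def)
  then have "card (computed_by (take (Suc j) ops))
      \<le> card (computed_by (take j ops) \<union> computed_by [ops ! j])"
    by (intro card_mono) (simp_all add: finite_computed_by)
  also have "\<dots> \<le> card (computed_by (take j ops)) + card (computed_by [ops ! j])"
    by (rule card_Un_le)
  also have "card (computed_by [ops ! j]) \<le> 1"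
    by (cases "ops ! j") (simp_all add: computed_by_def)
  finally show ?thesis by simp
qed simp

lemma valid_eval_breakpoints:
  assumes valid: "valid_eval M n E ops" and "k * q \<le> n" and "0 < q"
  obtains b where "\<And>i j. i \<le> j \<Longrightarrow> j \<le> k \<Longrightarrow> b i \<le> b j"
    and "\<And>i. i \<le> k \<Longrightarrow> card (computed_by (take (b i) ops)) = i * q"
proof -
  define f where "f j = card (computed_by (take j ops))" for j
  have f_mono: "f i \<le> f j" if "i \<le> j" for i j
    unfolding f_def using that by (intro card_mono finite_computed_by computed_by_take_mono)
  have "\<exists>j. f j = i * q" if "i \<le> k" for i
  proof -
    have "f (length ops) = n" using valid_eval_computed_by[OF valid] by (simp add: f_def)
    moreover have "i * q \<le> n" using that \<open>k * q \<le> n\<close> by (meson le_trans mult_le_mono1)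
    moreover have "\<bar>int (f (Suc j)) - int (f j)\<bar> \<le> 1" for j
      using f_mono[of j "Suc j"] card_computed_by_take_Suc[of j ops] by (simp add: f_def)
    ultimately have "\<exists>j\<le>length ops. int (f j) = int (i * q)"
      by (intro nat0_intermed_int_val) (auto simp: f_def computed_by_def simp flip: of_nat_mult)
    then obtain j where "int (f j) = int (i * q)" by blast
    then have "f j = i * q" by (simp only: of_nat_eq_iff)
    then show ?thesis by blast
  qed
  then obtain b where fb: "\<And>i. i \<le> k \<Longrightarrow> f (b i) = i * q" by metis
  show ?thesis
  proof
    show "b i \<le> b j" if "i \<le> j" "j \<le> k" for i j
    proof (rule ccontr)
      assume "\<not> b i \<le> b j"
      then have "j * q \<le> i * q" using f_mono[of "b j" "b i"] fb that by simp
      then show False using that \<open>\<not> b i \<le> b j\<close> \<open>0 < q\<close> by (cases "i = j") auto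
    qed
  qed (use fb in \<open>simp add: f_def\<close>)
qed

lemma io_cost_take_split:
  "i \<le> j \<Longrightarrow> io_cost (take j ops) = io_cost (take i ops) + io_cost (drop i (take j ops))"
  by (metis append_take_drop_id io_cost_append min.absorb1 take_take)

lemma sum_io_cost_segments_le:
  assumes "\<And>i. i < k \<Longrightarrow> b i \<le> b (Suc i)"
  shows "(\<Sum>i<k. io_cost (drop (b i) (take (b (Suc i)) ops))) \<le> io_cost ops"
proof -
  have "io_cost (take (b 0) ops) + (\<Sum>i<k. io_cost (drop (b i) (take (b (Suc i)) ops)))
      = io_cost (take (b k) ops)"
    using assms
  proof (induction k)
    case (Suc k)
    then show ?case by (simp add: io_cost_take_split[of "b k" "b (Suc k)"])
  qed simp
  moreover have "io_cost (take (b k) ops) \<le> io_cost ops"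
    by (metis append_take_drop_id io_cost_append le_add1)
  ultimately show ?thesis by linarith
qed

lemma valid_eval_sum_cut_pairs_le:
  assumes valid: "valid_eval M n E ops" and E: "E \<subseteq> {0..<n} \<times> {0..<n}"
    and d: "\<And>a. out_deg E a \<le> d" and b: "\<And>i. i < k \<Longrightarrow> b i \<le> b (Suc i)"
  shows "(\<Sum>i<k. card (cut_pairs n E (computed_between ops (b i) (b (Suc i)))))
           \<le> d * (io_cost ops + 2 * k * M)"
proof -
  let ?seg = "\<lambda>i. drop (b i) (take (b (Suc i)) ops)"
  have "(\<Sum>i<k. card (cut_pairs n E (computed_between ops (b i) (b (Suc i)))))
      \<le> (\<Sum>i<k. d * (io_cost (?seg i) + 2 * M))"
  proof (rule sum_mono)
    fix i assume "i \<in> {..<k}"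
    let ?V = "computed_between ops (b i) (b (Suc i))"
    have "card (cut_pairs n E ?V) \<le> card (out_edges E ?V) + card (in_edges E ?V)"
      using finite_subset[OF E] by (intro card_cut_pairs_le) simp
    also have "\<dots> \<le> d * (io_cost (?seg i) + 2 * M)"
      using b \<open>i \<in> {..<k}\<close> by (intro valid_eval_segment_boundary_le[OF valid E d]) auto
    finally show "card (cut_pairs n E ?V) \<le> d * (io_cost (?seg i) + 2 * M)" .
  qed
  also have "\<dots> = d * ((\<Sum>i<k. io_cost (?seg i)) + 2 * k * M)"
    by (simp add: sum_distrib_left sum.distrib algebra_simps)
  also have "\<dots> \<le> d * (io_cost ops + 2 * k * M)"
    using sum_io_cost_segments_le[of k b ops] b by simp
  finally show ?thesis .
qed

lemma valid_eval_spectral_io_bound: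
  assumes valid: "valid_eval M n E ops" and E: "E \<subseteq> {0..<n} \<times> {0..<n}"
    and d: "\<And>a. out_deg E a \<le> d" and k: "k \<le> n"
  shows "real (n div k) * (\<Sum>i<k. eig_asc (laplacian n E) i)
           \<le> real d * (real (io_cost ops) + 2 * real k * real M)"
proof (cases "k = 0")
  case False
  define q where "q = n div k"
  have "0 < q" using False k by (simp add: q_def div_greater_zero_iff)
  have "k * q \<le> n" by (simp add: q_def times_div_less_eq_dividend)
  then obtain b where b_mono: "\<And>i j. i \<le> j \<Longrightarrow> j \<le> k \<Longrightarrow> b i \<le> b j"
    and b_card: "\<And>i. i \<le> k \<Longrightarrow> card (computed_by (take (b i) ops)) = i * q"
    using valid_eval_breakpoints[OF valid _ \<open>0 < q\<close>] by metis
  let ?V = "\<lambda>i. computed_between ops (b i) (b (Suc i))"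
  have b_Suc: "b i \<le> b (Suc i)" if "i < k" for i using b_mono that by simp
  have V_card: "card (?V i) = q" if "i < k" for i
    using b_card[of i] b_card[of "Suc i"] b_Suc[OF that] that by (simp add: card_computed_between)
  have "(\<Sum>i<k. eig_asc (laplacian n E) i) \<le> (\<Sum>i<k. card (cut_pairs n E (?V i)) / card (?V i))"
  proof (rule sum_eig_asc_laplacian_le_ratio_cut[OF k])
    show "?V i \<subseteq> {0..<n}" for i by (rule computed_between_subset[OF valid])
    show "?V i \<noteq> {}" if "i < k" for i using V_card[OF that] \<open>0 < q\<close> by auto
    show "?V i \<inter> ?V j = {}" if "i < k" "j < k" "i \<noteq> j" for i j
    proof (cases "i < j")
      case True
      then show ?thesis using that b_mono[of "Suc i" j] by (intro computed_between_disjoint) auto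
    next
      case False
      then have "?V j \<inter> ?V i = {}" using that b_mono[of "Suc j" i] by (intro computed_between_disjoint) auto
      then show ?thesis by blast
    qed
  qed
  also have "\<dots> = (\<Sum>i<k. card (cut_pairs n E (?V i)) / q)"
    using V_card by (intro sum.cong) auto
  finally have "real q * (\<Sum>i<k. eig_asc (laplacian n E) i)
      \<le> real q * (\<Sum>i<k. card (cut_pairs n E (?V i)) / q)"
    by (rule mult_left_mono) simp
  also have "\<dots> = real (\<Sum>i<k. card (cut_pairs n E (?V i)))"
    using \<open>0 < q\<close> by (simp add: sum_distrib_left)
  also have "\<dots> \<le> real (d * (io_cost ops + 2 * k * M))"
  proof -
    have "(\<Sum>i<k. card (cut_pairs n E (?V i))) \<le> d * (io_cost ops + 2 * k * M)"
      by (rule valid_eval_sum_cut_pairs_le[OF valid E d]) (rule b_Suc)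
    then show ?thesis by (simp only: of_nat_le_iff)
  qed
  finally show ?thesis by (simp add: q_def)
qed simp

lemma J_star_attained:
  assumes "valid_eval M n E ops0"
  obtains ops where "valid_eval M n E ops" and "J_star M n E = enat (io_cost ops)"
proof -
  have "J_star M n E \<in> (\<lambda>ops. enat (io_cost ops)) ` {ops. valid_eval M n E ops}"
    unfolding J_star_def using assms by (intro wellorder_InfI) blast
  then show ?thesis using that by blast
qed

lemma out_deg_le_Max:
  assumes "E \<subseteq> {0..<n} \<times> {0..<n}"
  shows "out_deg E a \<le> Max (out_deg E ` {0..<n})"
proof (cases "a < n")
  case False
  then have "{w. (a, w) \<in> E} = {}" using assms by auto
  then show ?thesis by (simp add: out_deg_def)
qed simp

lemma Max_out_deg_pos:
  assumes E: "E \<subseteq> {0..<n} \<times> {0..<n}" and "E \<noteq> {}"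
  shows "0 < Max (out_deg E ` {0..<n})"
proof -
  obtain a w where "(a, w) \<in> E" using assms(2) by auto
  moreover have "finite {w. (a, w) \<in> E}"
    by (rule finite_subset[of _ "{0..<n}"]) (use E in blast)+
  ultimately have "0 < out_deg E a" by (auto simp: out_deg_def card_gt_0_iff)
  then show ?thesis using out_deg_le_Max[OF E, of a] by linarith
qed

theorem theorem4p5:
  fixes n M k :: nat and E :: "(nat \<times> nat) set"
  assumes "comp_graph n E"
    and "E \<noteq> {}"
    and "1 \<le> k" and "k \<le> n"
  shows "ereal (1 / real (Max (out_deg E ` {0..<n})) * real (n div k)
                * (\<Sum>i<k. eig_asc (laplacian n E) i) - 2 * real k * real M)
         \<le> ereal_of_enat (J_star M n E)"
proof (cases "\<exists>ops. valid_eval M n E ops")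
  case True
  then obtain ops where valid: "valid_eval M n E ops" and J: "J_star M n E = enat (io_cost ops)"
    using J_star_attained by metis
  have E: "E \<subseteq> {0..<n} \<times> {0..<n}" using assms(1) by (simp add: comp_graph_def)
  let ?d = "Max (out_deg E ` {0..<n})"
  have "real (n div k) * (\<Sum>i<k. eig_asc (laplacian n E) i)
      \<le> real ?d * (real (io_cost ops) + 2 * real k * real M)"
    using valid_eval_spectral_io_bound[OF valid E out_deg_le_Max[OF E] assms(4)] .
  then have "real (n div k) * (\<Sum>i<k. eig_asc (laplacian n E) i) / real ?d
      \<le> real (io_cost ops) + 2 * real k * real M"
    using Max_out_deg_pos[OF E assms(2)] by (simp add: pos_divide_le_eq mult.commute)
  then show ?thesis by (simp add: J)
next
  case False
  then show ?thesis by (simp add: J_star_def top_enat_def)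
qed

end
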